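(* Let $a\ge b\ge2$ and $k$ be integers with $k\ge a+b+2$. Then for every $(i,j)\in C_3\cup\overline{C}_3$ we have $w_1,w_4,w_5,w_6\in\mathcal{R}^k_{(a,b),(i,j)}$.
   Context: $\widehat{\mathfrak{su}}(3)_k$ fusion. Let $P_+^k=\{(\lambda_1,\lambda_2)\in\mathbb{Z}_{\ge0}^2:\lambda_1+\lambda_2\le k\}$. For $\lambda,\mu,\nu\in P_+^k$ set - $\mathcal{A}=\tfrac13[2(\lambda_1+\mu_1+\nu_2)+\lambda_2+\mu_2+\nu_1]$, - $\mathcal{B}=\tfrac13[\lambda_1+\mu_1+\nu_2+2(\lambda_2+\mu_2+\nu_1)]$, - $k_0^{\max}=\min(\mathcal{A},\mathcal{B})$, - $k_0^{\min}=\max(\lambda_1+\lambda_2,\mu_1+\mu_2,\nu_1+\nu_2,\mathcal{A}-\lambda_1,\mathcal{A}-\mu_1,\mathcal{A}-\nu_2,\mathcal{B}-\lambda_2,\mathcal{B}-\mu_2,\mathcal{B}-\nu_1)$. The fusion multiplicity is $N^{(k)\nu}_{\lambda,\mu}=\min(k_0^{\max},k)-k_0^{\min}+1$ if $\mathcal{A},\mathcal{B}$ are nonnegative integers, $k_0^{\max}\ge k_0^{\min}$ and $k\ge k_0^{\min}$; otherwise it is $0$. The set $\mathcal{R}^k_{\lambda,\mu}$ is $\{\nu\in P_+^k:N^{(k)\nu}_{\lambda,\mu}\ne0\}$. The candidate weights are $w_1=(a-1,b+2)$, $w_2=(a+2,b-1)$, $w_3=(a+1,b-2)$, $w_4=(a-2,b+1)$,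 $w_5=(a+1,b+1)$, $w_6=(a-1,b-1)$. The sets are defined by - $C_3=\{(0,3l):l\in\mathbb{Z},\ 1\le l\le\min(k-a-b-1,b-1)\}$, - $\overline{C}_3=\{(3l,0):l\in\mathbb{Z},\ 1\le l\le\min(k-a-b-1,b-1)\}$. *)

theory Defs
  imports Complex_Main
begin

type_synonym wt = "int \<times> int"

definition dominant :: "int \<Rightarrow> wt set" where
  "dominant k = {(l1, l2). 0 \<le> l1 \<and> 0 \<le> l2 \<and> l1 + l2 \<le> k}"

definition fusA :: "wt \<Rightarrow> wt \<Rightarrow> wt \<Rightarrow> rat" where
  "fusA lam mu nu = (2 * of_int (fst lam + fst mu + snd nu) + of_int (snd lam + snd mu + fst nu)) / 3"

definition fusB :: "wt \<Rightarrow> wt \<Rightarrow> wt \<Rightarrow> rat" where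
  "fusB lam mu nu = (of_int (fst lam + fst mu + snd nu) + 2 * of_int (snd lam + snd mu + fst nu)) / 3"

definition k0max :: "wt \<Rightarrow> wt \<Rightarrow> wt \<Rightarrow> rat" where
  "k0max lam mu nu = min (fusA lam mu nu) (fusB lam mu nu)"

definition k0min :: "wt \<Rightarrow> wt \<Rightarrow> wt \<Rightarrow> rat" where
  "k0min lam mu nu = (let A = fusA lam mu nu; B = fusB lam mu nu in
     Max {of_int (fst lam + snd lam), of_int (fst mu + snd mu), of_int (fst nu + snd nu),
          A - of_int (fst lam), A - of_int (fst mu), A - of_int (snd nu),
          B - of_int (snd lam), B - of_int (snd mu), B - of_int (fst nu)})"

definition fusion_mult :: "int \<Rightarrow> wt \<Rightarrow> wt \<Rightarrow> wt \<Rightarrow> rat" where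
  "fusion_mult k lam mu nu =
     (let A = fusA lam mu nu; B = fusB lam mu nu in
      if A \<in> \<int> \<and> 0 \<le> A \<and> B \<in> \<int> \<and> 0 \<le> B \<and> k0max lam mu nu \<ge> k0min lam mu nu
         \<and> of_int k \<ge> k0min lam mu nu
      then min (k0max lam mu nu) (of_int k) - k0min lam mu nu + 1 else 0)"

definition fusionR :: "int \<Rightarrow> wt \<Rightarrow> wt \<Rightarrow> wt set" where
  "fusionR k lam mu = {nu \<in> dominant k. fusion_mult k lam mu nu \<noteq> 0}"

definition C3 :: "int \<Rightarrow> int \<Rightarrow> int \<Rightarrow> wt set" where
  "C3 a b k = {(0, 3 * l) | l. 1 \<le> l \<and> l \<le> min (k - a - b - 1) (b - 1)}"

definition C3bar :: "int \<Rightarrow> int \<Rightarrow> int \<Rightarrow> wt set" where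
  "C3bar a b k = {(3 * l, 0) | l. 1 \<le> l \<and> l \<le> min (k - a - b - 1) (b - 1)}"

end

theory Submission
  imports Defs
begin

text \<open>For each of the weights w1, w4, w5, w6 the quantities A and B are integers which can be
  written down explicitly (e.g. A = a + b + 1 + l and B = a + b + 2l for w1 and (i, j) = (0, 3l));
  it then only remains to check the nine linear inequalities of k0min against min A B and k,
  which is where the constraints l \<le> k - a - b - 1 and l \<le> b - 1 are used.\<close>

lemma fusionR_memberI:
  fixes A B :: int
  assumes "nu \<in> dominant k"
    and A: "3 * A = 2 * (fst lam + fst mu + snd nu) + (snd lam + snd mu + fst nu)"
    and B: "3 * B = (fst lam + fst mu + snd nu) + 2 * (snd lam + snd mu + fst nu)"
    and "0 \<le> A" "0 \<le> B"
    and bounds: "\<forall>t \<in> {fst lam + snd lam, fst mu + snd mu, fst nu + snd nu,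
          A - fst lam, A - fst mu, A - snd nu,
          B - snd lam, B - snd mu, B - fst nu}. t \<le> A \<and> t \<le> B \<and> t \<le> k"
  shows "nu \<in> fusionR k lam mu"
proof -
  have hA: "fusA lam mu nu = of_int A"
    unfolding fusA_def using arg_cong[OF A, of "of_int :: int \<Rightarrow> rat"] by simp
  have hB: "fusB lam mu nu = of_int B"
    unfolding fusB_def using arg_cong[OF B, of "of_int :: int \<Rightarrow> rat"] by simp
  have k0min_le: "k0min lam mu nu \<le> x \<longleftrightarrow>
      (\<forall>t \<in> {fst lam + snd lam, fst mu + snd mu, fst nu + snd nu,
          A - fst lam, A - fst mu, A - snd nu,
          B - snd lam, B - snd mu, B - fst nu}. of_int t \<le> x)" for x :: rat
    unfolding k0min_def Let_def hA hB by (subst Max_le_iff) auto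
  have "k0min lam mu nu \<le> k0max lam mu nu \<and> k0min lam mu nu \<le> of_int k"
    unfolding k0min_le k0max_def hA hB using bounds by (simp only: Ball_def) auto
  then have "fusion_mult k lam mu nu \<noteq> 0"
    unfolding fusion_mult_def Let_def using \<open>0 \<le> A\<close> \<open>0 \<le> B\<close> hA hB by (simp add: min_def)
  then show ?thesis
    using \<open>nu \<in> dominant k\<close> unfolding fusionR_def by simp
qed

lemma C3_weights_in_fusionR:
  fixes a b k l :: int
  assumes "b \<le> a" "1 \<le> l" "l \<le> k - a - b - 1" "l \<le> b - 1"
  shows "(a - 1, b + 2) \<in> fusionR k (a, b) (0, 3 * l)"
    and "(a - 2, b + 1) \<in> fusionR k (a, b) (0, 3 * l)"
    and "(a + 1, b + 1) \<in> fusionR k (a, b) (0, 3 * l)"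
    and "(a - 1, b - 1) \<in> fusionR k (a, b) (0, 3 * l)"
  subgoal using assms by (auto intro!: fusionR_memberI[where A = "a + b + 1 + l" and B = "a + b + 2 * l"]
                         simp: dominant_def)
  subgoal using assms by (auto intro!: fusionR_memberI[where A = "a + b + l" and B = "a + b + 2 * l - 1"]
                         simp: dominant_def)
  subgoal using assms by (auto intro!: fusionR_memberI[where A = "a + b + 1 + l" and B = "a + b + 1 + 2 * l"]
                         simp: dominant_def)
  subgoal using assms by (auto intro!: fusionR_memberI[where A = "a + b - 1 + l" and B = "a + b - 1 + 2 * l"]
                         simp: dominant_def)
  done

lemma C3bar_weights_in_fusionR:
  fixes a b k l :: int
  assumes "b \<le> a" "1 \<le> l" "l \<le> k - a - b - 1" "l \<le> b - 1"
  shows "(a - 1, b + 2) \<in> fusionR k (a, b) (3 * l, 0)"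
    and "(a - 2, b + 1) \<in> fusionR k (a, b) (3 * l, 0)"
    and "(a + 1, b + 1) \<in> fusionR k (a, b) (3 * l, 0)"
    and "(a - 1, b - 1) \<in> fusionR k (a, b) (3 * l, 0)"
  subgoal using assms by (auto intro!: fusionR_memberI[where A = "a + b + 1 + 2 * l" and B = "a + b + l"]
                         simp: dominant_def)
  subgoal using assms by (auto intro!: fusionR_memberI[where A = "a + b + 2 * l" and B = "a + b + l - 1"]
                         simp: dominant_def)
  subgoal using assms by (auto intro!: fusionR_memberI[where A = "a + b + 1 + 2 * l" and B = "a + b + 1 + l"]
                         simp: dominant_def)
  subgoal using assms by (auto intro!: fusionR_memberI[where A = "a + b - 1 + 2 * l" and B = "a + b - 1 + l"]
                         simp: dominant_def)
  done

theorem mainTheorem13: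
  fixes a b k i j :: int
  assumes "a \<ge> b" and "b \<ge> 2" and "k \<ge> a + b + 2"
    and "(i, j) \<in> C3 a b k \<union> C3bar a b k"
  shows "(a - 1, b + 2) \<in> fusionR k (a, b) (i, j)
       \<and> (a - 2, b + 1) \<in> fusionR k (a, b) (i, j)
       \<and> (a + 1, b + 1) \<in> fusionR k (a, b) (i, j)
       \<and> (a - 1, b - 1) \<in> fusionR k (a, b) (i, j)"
  using assms(4)
proof
  assume "(i, j) \<in> C3 a b k"
  then obtain l where "(i, j) = (0, 3 * l)" "1 \<le> l" "l \<le> k - a - b - 1" "l \<le> b - 1"
    unfolding C3_def by auto
  then show ?thesis
    using C3_weights_in_fusionR[OF \<open>a \<ge> b\<close>] by simp
next
  assume "(i, j) \<in> C3bar a b k"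
  then obtain l where "(i, j) = (3 * l, 0)" "1 \<le> l" "l \<le> k - a - b - 1" "l \<le> b - 1"
    unfolding C3bar_def by auto
  then show ?thesis
    using C3bar_weights_in_fusionR[OF \<open>a \<ge> b\<close>] by simp
qed

end
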